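(* Let $X$ be a hyperbolic approximation of $Z$ with parameter $r$, let $v,v'\in V$ be horizontally distinct, and let $l$ be their critical level. Then $|vv'|\le\ell(v)+\ell(v')-2l+3$.
   Context: Hyperbolic approximation: let $(Z,d)$ be a bounded metric space with at least two points and fix $0<r\le1/6$. Let $k_0$ be the largest integer with $\operatorname{diam}Z<r^{k_0}$. For each integer $k\ge k_0$ choose a maximal $r^k$-separated subset $V_k\subset Z$. Vertex set $V=\bigsqcup_{k\ge k_0}V_k$ (disjoint union), level $\ell(v)=k$ for $v\in V_k$, ball $B(v)=\{z:d(z,v)<2r^k\}$ with closure $\overline B(v)$. Edges: equal-level $v,v'$ with $\overline B(v)\cap\overline B(v')\ne\emptyset$, or vertices on adjacent levels whose higher-level ball is contained in the lower-level ball. Path metric with unit edges, $|vv'|$; $d$ is the metric of $Z$. Vertices $v,v'$ are horizontally distinct if $\ell(v),\ell(v')\ge0$ and $d(v,v')\ge r^{\min\{\ell(v),\ell(v')\}}$; in that case their critical level is the integer $l$ with $r^l\le d(v,v')<r^{l-1}$. *)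

theory Defs
  imports "HOL-Analysis.Analysis" "HOL-Library.Extended_Nat"
begin

text \<open>Vertices are pairs (k, v) with k \<ge> k0 and v \<in> V k,
  so the vertex set is the disjoint union of the V k; the level of (k,v) is k.\<close>

definition separated_set :: "'a::metric_space set \<Rightarrow> real \<Rightarrow> int \<Rightarrow> 'a set \<Rightarrow> bool" where
  "separated_set Z r k S \<longleftrightarrow> S \<subseteq> Z \<and> (\<forall>x\<in>S. \<forall>y\<in>S. x \<noteq> y \<longrightarrow> r powi k \<le> dist x y)"

definition maximal_separated :: "'a::metric_space set \<Rightarrow> real \<Rightarrow> int \<Rightarrow> 'a set \<Rightarrow> bool" where
  "maximal_separated Z r k S \<longleftrightarrow> separated_set Z r k S \<and>
     (\<forall>T. separated_set Z r k T \<and> S \<subseteq> T \<longrightarrow> T = S)"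

definition hyp_k0 :: "'a::metric_space set \<Rightarrow> real \<Rightarrow> int" where
  "hyp_k0 Z r = (GREATEST k::int. diameter Z < r powi k)"

definition hverts :: "'a::metric_space set \<Rightarrow> real \<Rightarrow> (int \<Rightarrow> 'a set) \<Rightarrow> (int \<times> 'a) set" where
  "hverts Z r V = {(k, v). hyp_k0 Z r \<le> k \<and> v \<in> V k}"

definition hball :: "'a::metric_space set \<Rightarrow> real \<Rightarrow> int \<times> 'a \<Rightarrow> 'a set" where
  "hball Z r p = {z \<in> Z. dist z (snd p) < 2 * r powi (fst p)}"

definition hcball :: "'a::metric_space set \<Rightarrow> real \<Rightarrow> int \<times> 'a \<Rightarrow> 'a set" where
  "hcball Z r p = Z \<inter> closure (hball Z r p)"

definition hedge :: "'a::metric_space set \<Rightarrow> real \<Rightarrow> (int \<Rightarrow> 'a set) \<Rightarrow> int \<times> 'a \<Rightarrow> int \<times> 'a \<Rightarrow> bool" where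
  "hedge Z r V p q \<longleftrightarrow> p \<in> hverts Z r V \<and> q \<in> hverts Z r V \<and> p \<noteq> q \<and>
     ((fst p = fst q \<and> hcball Z r p \<inter> hcball Z r q \<noteq> {}) \<or>
      (fst q = fst p + 1 \<and> hball Z r q \<subseteq> hball Z r p) \<or>
      (fst p = fst q + 1 \<and> hball Z r p \<subseteq> hball Z r q))"

definition hpath :: "'a::metric_space set \<Rightarrow> real \<Rightarrow> (int \<Rightarrow> 'a set) \<Rightarrow> int \<times> 'a \<Rightarrow> int \<times> 'a \<Rightarrow> (int \<times> 'a) list \<Rightarrow> bool" where
  "hpath Z r V p q xs \<longleftrightarrow> xs \<noteq> [] \<and> hd xs = p \<and> last xs = q \<and>
     (\<forall>i < length xs - 1. hedge Z r V (xs ! i) (xs ! Suc i))"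

text \<open>Path metric with unit edges (infinity if no path exists).\<close>
definition hdist :: "'a::metric_space set \<Rightarrow> real \<Rightarrow> (int \<Rightarrow> 'a set) \<Rightarrow> int \<times> 'a \<Rightarrow> int \<times> 'a \<Rightarrow> enat" where
  "hdist Z r V p q = Inf {enat (length xs - 1) | xs. hpath Z r V p q xs}"

definition horiz_distinct :: "real \<Rightarrow> int \<times> 'a::metric_space \<Rightarrow> int \<times> 'a \<Rightarrow> bool" where
  "horiz_distinct r p q \<longleftrightarrow> 0 \<le> fst p \<and> 0 \<le> fst q \<and>
     r powi (min (fst p) (fst q)) \<le> dist (snd p) (snd q)"

definition critical_level :: "real \<Rightarrow> int \<times> 'a::metric_space \<Rightarrow> int \<times> 'a \<Rightarrow> int \<Rightarrow> bool" where
  "critical_level r p q l \<longleftrightarrow> r powi l \<le> dist (snd p) (snd q) \<and> dist (snd p) (snd q) < r powi (l - 1)"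

end

theory Submission
  imports Defs
begin

text \<open>Walk from each of v = (k, x) and v' = (k', x') to the coarser level l - 1, one level per edge:
  at level j - 1 pick a net point within r^(j-1) of x; since r \<le> 1/3 the ball of the previous
  ancestor is nested in the ball of the new one, so consecutive ancestors are joined by an edge.
  The two ancestors at level l - 1 both lie within 2 r^(l-1) of x, because d(x, x') < r^(l-1),
  so they coincide or are joined by a horizontal edge. This gives a path of length at most
  (k - l + 1) + 1 + (k' - l + 1).\<close>

lemma power_int_less_power_int_imp_less:
  fixes a :: real
  assumes "0 < a" "a < 1" "a powi m < a powi n"
  shows "n < m"
  using power_int_decreasing[of m n a] assms by (cases "m \<le> n") auto

lemma less_power_int_iff_less_log:
  fixes a x :: real
  assumes "0 < x" "0 < a" "a < 1"
  shows "x < a powi k \<longleftrightarrow> k < log a x"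
proof -
  have "x < a powi k \<longleftrightarrow> a powr log a x < a powr k"
    using assms by (simp add: powr_real_of_int')
  also have "\<dots> \<longleftrightarrow> k < log a x"
    using assms powr_less_mono'[of a] by (metis not_less_iff_gr_or_eq)
  finally show ?thesis .
qed

lemma hyp_k0_eq:
  assumes "0 < diameter Z" "0 < r" "r < 1"
  shows "hyp_k0 Z r = \<lceil>log r (diameter Z)\<rceil> - 1"
  unfolding hyp_k0_def less_power_int_iff_less_log[OF assms]
proof (rule Greatest_equality)
  show "real_of_int (\<lceil>log r (diameter Z)\<rceil> - 1) < log r (diameter Z)"
    using ceiling_correct by simp
  show "k \<le> \<lceil>log r (diameter Z)\<rceil> - 1" if "real_of_int k < log r (diameter Z)" for k
    using that le_of_int_ceiling[of "log r (diameter Z)"] by linarith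
qed

lemma hyp_k0_less_iff:
  assumes "0 < diameter Z" "0 < r" "r < 1"
  shows "hyp_k0 Z r < l \<longleftrightarrow> r powi l \<le> diameter Z"
  using less_power_int_iff_less_log[OF assms, of l] ceiling_le_iff[of "log r (diameter Z)" l]
  by (auto simp: hyp_k0_eq[OF assms])

lemma hyp_k0_less_of_dist:
  assumes "bounded Z" "x \<in> Z" "x' \<in> Z" "0 < r" "r < 1" "r powi l \<le> dist x x'"
  shows "hyp_k0 Z r < l"
proof -
  have "dist x x' \<le> diameter Z" using diameter_bounded_bound assms(1-3) .
  moreover have "0 < r powi l" using assms(4) by simp
  ultimately show ?thesis using hyp_k0_less_iff[of Z r l] assms(4-6) by linarith
qed

lemma relpowp_symp_swap:
  assumes "symp P" "(P ^^ n) x y"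
  shows "(P ^^ n) y x"
  using assms(2)
proof (induction n arbitrary: y)
  case (Suc n)
  from Suc.prems obtain w where "(P ^^ n) x w" "P w y" by (rule relpowp_Suc_E)
  then have "P y w" "(P ^^ n) w x" using Suc.IH assms(1) by (auto dest: sympD)
  then show ?case by (rule relpowp_Suc_I2)
qed simp

lemma symp_hedge: "symp (hedge Z r V)"
  unfolding hedge_def by (rule sympI) auto

lemma hdist_le_of_relpowp:
  assumes "(hedge Z r V ^^ n) p q"
  shows "\<exists>m\<le>n. hdist Z r V p q = enat m"
proof -
  obtain f where f: "f 0 = p" "f n = q" "\<forall>i<n. hedge Z r V (f i) (f (Suc i))"
    using assms relpowp_fun_conv by metis
  have "hpath Z r V p q (map f [0..<Suc n])"
    using f by (auto simp: hpath_def hd_map last_map simp del: upt_Suc)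
  then have "hdist Z r V p q \<le> enat n"
    unfolding hdist_def by (force intro: Inf_lower)
  then show ?thesis by (cases "hdist Z r V p q") auto
qed

lemma hdist_le_of_joined_walks:
  assumes "(hedge Z r V ^^ d) p (j, y)" "(hedge Z r V ^^ d') q (j, y')"
    and "y = y' \<or> hedge Z r V (j, y) (j, y')"
  shows "\<exists>m \<le> d + 1 + d'. hdist Z r V p q = enat m"
proof -
  obtain s where "s \<le> 1" "(hedge Z r V ^^ s) (j, y) (j, y')"
    using assms(3) by (metis le_refl relpowp_0_I relpowp_1 zero_le_one)
  then have "(hedge Z r V ^^ (d + s + d')) p q"
    using assms(1) relpowp_symp_swap[OF symp_hedge assms(2)] by (blast intro: relpowp_trans)
  then show ?thesis using hdist_le_of_relpowp \<open>s \<le> 1\<close> by fastforce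
qed

lemma maximal_separated_near:
  assumes "maximal_separated Z r k S" "z \<in> Z" "0 < r"
  shows "\<exists>p\<in>S. dist z p < r powi k"
proof (rule ccontr)
  assume far: "\<not> ?thesis"
  with assms(1,2) have "separated_set Z r k (insert z S)"
    by (auto simp: maximal_separated_def separated_set_def dist_commute not_less)
  with assms(1) have "z \<in> S" by (auto simp: maximal_separated_def)
  with far assms(3) show False by force
qed

lemma hball_subset_hball:
  assumes "dist y p + 2 * r powi (m + 1) \<le> 2 * r powi m"
  shows "hball Z r (m + 1, y) \<subseteq> hball Z r (m, p)"
proof
  fix z assume "z \<in> hball Z r (m + 1, y)"
  moreover have "dist z p \<le> dist z y + dist y p" by (rule dist_triangle)
  ultimately show "z \<in> hball Z r (m, p)" using assms by (auto simp: hball_def)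
qed

lemma hedge_parent:
  assumes "(m + 1, y) \<in> hverts Z r V" "(m, p) \<in> hverts Z r V"
    and "dist y p + 2 * r powi (m + 1) \<le> 2 * r powi m"
  shows "hedge Z r V (m + 1, y) (m, p)"
  using assms hball_subset_hball[OF assms(3)] by (auto simp: hedge_def)

lemma hedge_or_eq_of_common_point:
  assumes "(j, y) \<in> hverts Z r V" "(j, y') \<in> hverts Z r V"
    and "x \<in> Z" "dist x y < 2 * r powi j" "dist x y' < 2 * r powi j"
  shows "y = y' \<or> hedge Z r V (j, y) (j, y')"
proof -
  have "x \<in> hcball Z r (j, y) \<inter> hcball Z r (j, y')"
    using assms(3-5)
    by (auto simp: hcball_def hball_def dist_commute intro: closure_subset[THEN subsetD])
  then show ?thesis using assms(1,2) by (auto simp: hedge_def)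
qed

lemma hedge_walk_to_ancestor:
  assumes r: "0 < r" "r \<le> 1/3"
    and nets: "\<forall>k. hyp_k0 Z r \<le> k \<longrightarrow> maximal_separated Z r k (V k)"
    and v: "(k, x) \<in> hverts Z r V" and j: "hyp_k0 Z r \<le> j" "j \<le> k"
  shows "\<exists>y. (hedge Z r V ^^ nat (k - j)) (k, x) (j, y) \<and> y \<in> V j \<and> dist x y < r powi j"
proof -
  have k: "hyp_k0 Z r \<le> k" "x \<in> V k" using v by (auto simp: hverts_def)
  then have x: "x \<in> Z" using nets by (auto simp: maximal_separated_def separated_set_def)
  have "hyp_k0 Z r \<le> j \<longrightarrow>
      (\<exists>y. (hedge Z r V ^^ nat (k - j)) (k, x) (j, y) \<and> y \<in> V j \<and> dist x y < r powi j)"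
    using j(2)
  proof (induction j rule: int_le_induct)
    case base
    then show ?case using k r by auto
  next
    case (step j)
    show ?case
    proof
      assume j: "hyp_k0 Z r \<le> j - 1"
      then obtain y where y: "(hedge Z r V ^^ nat (k - j)) (k, x) (j, y)" "y \<in> V j"
        "dist x y < r powi j" using step by auto
      obtain p where p: "p \<in> V (j - 1)" "dist x p < r powi (j - 1)"
        using maximal_separated_near[OF _ x r(1)] nets j by blast
      have "r powi j = r * r powi (j - 1)"
        using r by (simp flip: power_int_add_1')
      then have "3 * r powi j \<le> r powi (j - 1)"
        using r by (simp add: mult_right_le_one_le)
      moreover have "dist y p \<le> dist x y + dist x p" by (rule dist_triangle3)
      ultimately have "dist y p + 2 * r powi (j - 1 + 1) \<le> 2 * r powi (j - 1)"
        using y(3) p(2) by simp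
      then have "hedge Z r V (j - 1 + 1, y) (j - 1, p)"
        using j y(2) p(1) by (intro hedge_parent) (auto simp: hverts_def)
      moreover have "nat (k - (j - 1)) = Suc (nat (k - j))" using step.hyps by simp
      ultimately show "\<exists>y. (hedge Z r V ^^ nat (k - (j - 1))) (k, x) (j - 1, y)
          \<and> y \<in> V (j - 1) \<and> dist x y < r powi (j - 1)"
        using y(1) p by (auto intro: relpowp_Suc_I)
    qed
  qed
  then show ?thesis using j(1) by blast
qed

theorem mainTheorem15:
  fixes Z :: "'a::metric_space set" and r :: real and V :: "int \<Rightarrow> 'a set"
    and v v' :: "int \<times> 'a" and l :: int
  assumes "bounded Z" and "\<exists>x\<in>Z. \<exists>y\<in>Z. x \<noteq> y"
    and "0 < r" and "r \<le> 1/6"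
    and "\<forall>k. hyp_k0 Z r \<le> k \<longrightarrow> maximal_separated Z r k (V k)"
    and "v \<in> hverts Z r V" and "v' \<in> hverts Z r V"
    and "horiz_distinct r v v'"
    and "critical_level r v v' l"
  shows "\<exists>n::nat. hdist Z r V v v' = enat n \<and> int n \<le> fst v + fst v' - 2 * l + 3"
proof -
  obtain k x k' x' where vv: "v = (k, x)" "v' = (k', x')" by (cases v, cases v')
  have r: "0 < r" "r < 1" "r \<le> 1/3" using assms(3,4) by auto
  have x: "x \<in> Z" "x' \<in> Z"
    using assms(5-7) vv by (auto simp: hverts_def maximal_separated_def separated_set_def)
  have dl: "r powi l \<le> dist x x'" "dist x x' < r powi (l - 1)"
    using assms(9) vv by (auto simp: critical_level_def)
  have "r powi min k k' < r powi (l - 1)"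
    using assms(8) dl(2) vv by (simp add: horiz_distinct_def)
  from power_int_less_power_int_imp_less[OF r(1,2) this]
  have lk: "l - 1 < k" "l - 1 < k'" by simp_all
  have k0: "hyp_k0 Z r \<le> l - 1" using hyp_k0_less_of_dist[OF assms(1) x r(1,2) dl(1)] by simp
  obtain y where y: "(hedge Z r V ^^ nat (k - (l - 1))) v (l - 1, y)" "y \<in> V (l - 1)"
      "dist x y < r powi (l - 1)"
    using hedge_walk_to_ancestor[OF r(1,3) assms(5), of k x "l - 1"] assms(6) vv k0 lk by auto
  obtain y' where y': "(hedge Z r V ^^ nat (k' - (l - 1))) v' (l - 1, y')" "y' \<in> V (l - 1)"
      "dist x' y' < r powi (l - 1)"
    using hedge_walk_to_ancestor[OF r(1,3) assms(5), of k' x' "l - 1"] assms(7) vv k0 lk by auto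
  have "dist x y' \<le> dist x x' + dist x' y'" by (rule dist_triangle)
  then have "y = y' \<or> hedge Z r V (l - 1, y) (l - 1, y')"
    using y y' dl(2) x k0 zero_less_power_int[OF r(1), of "l - 1"]
    by (intro hedge_or_eq_of_common_point) (auto simp: hverts_def)
  then obtain n where "hdist Z r V v v' = enat n" "n \<le> nat (k - (l - 1)) + 1 + nat (k' - (l - 1))"
    using hdist_le_of_joined_walks[OF y(1) y'(1)] by blast
  then show ?thesis using lk vv by auto
qed

end
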